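(* Let $G$ be a structured quadratic-bilinear system given by $(\mathcal C,\mathcal K,\mathcal B,\mathcal N,\mathcal H)$ with structured symmetric subsystem transfer functions $G_k$, and $\widehat G$ the reduced-order system obtained by projection with $V,W\in\mathbb C^{n\times r}$ of full column rank, with reduced symmetric subsystem transfer functions $\widehat G_k$. Let $\sigma\in\mathbb C$ be such that $\mathcal C,\mathcal K,\mathcal B,\mathcal N$ can be evaluated at $\sigma,2\sigma,3\sigma$, $\mathcal H$ at $(\sigma,\sigma),(2\sigma,\sigma),(\sigma,2\sigma)$, and $\mathcal K(\sigma),\mathcal K(2\sigma),\mathcal K(3\sigma)$ are invertible; assume also that $W^{\mathsf H}\mathcal K(s)V$ is invertible for $s\in\{\sigma,2\sigma,3\sigma\}$. Define $$V_1=\mathcal K(\sigma)^{-1}\mathcal B(\sigma),\qquad V_2=\mathcal K(2\sigma)^{-1}\big(\mathcal H(\sigma,\sigma)(V_1\otimes V_1)+\mathcal N(\sigma)(I_m\otimes V_1)\big),$$ $$V_3=\mathcal K(3\sigma)^{-1}\big(\mathcal H(2\sigma,\sigma)(V_2\otimes V_1)+\mathcal H(\sigma,2\sigma)(V_1\otimes V_2)+\mathcal N(2\sigma)(I_m\otimes V_2)\big),$$ $$W_1=\mathcal K(2\sigma)^{-\mathsf H}\mathcal C(2\sigma)^{\mathsf H},\qquad W_2=\mathcal K(3\sigma)^{-\mathsf H}\mathcal C(3\sigma)^{\mathsf H}.$$ Then: (a) If $\operatorname{span}(V)\supseteq\operatorname{span}([V_1\ V_2\ V_3])$ (and $W$ is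 any full-rank matrix of the same size as $V$), then $G_1(\sigma)=\widehat G_1(\sigma)$, $G_2(\sigma,\sigma)=\widehat G_2(\sigma,\sigma)$, $G_3(\sigma,\sigma,\sigma)=\widehat G_3(\sigma,\sigma,\sigma)$. (b) If $\operatorname{span}(V)\supseteq\operatorname{span}(V_1)$ and $\operatorname{span}(W)\supseteq\operatorname{span}(W_1)$, then $G_1(\sigma)=\widehat G_1(\sigma)$, $G_1(2\sigma)=\widehat G_1(2\sigma)$, $G_2(\sigma,\sigma)=\widehat G_2(\sigma,\sigma)$. (c) If $\operatorname{span}(V)\supseteq\operatorname{span}([V_1\ V_2])$ and $\operatorname{span}(W)\supseteq\operatorname{span}(W_2)$, then $G_1(\sigma)=\widehat G_1(\sigma)$, $G_1(3\sigma)=\widehat G_1(3\sigma)$, $G_2(\sigma,\sigma)=\widehat G_2(\sigma,\sigma)$, $G_3(\sigma,\sigma,\sigma)=\widehat G_3(\sigma,\sigma,\sigma)$.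
   Context: A structured quadratic-bilinear system (in frequency domain) with $n$ states, $m$ inputs and $p$ outputs is given by matrix-valued functions $\mathcal C:\mathbb C\to\mathbb C^{p\times n}$, $\mathcal K:\mathbb C\to\mathbb C^{n\times n}$, $\mathcal B:\mathbb C\to\mathbb C^{n\times m}$, $\mathcal N:\mathbb C\to\mathbb C^{n\times nm}$ with $\mathcal N(s)=[\mathcal N_1(s)\ \cdots\ \mathcal N_m(s)]$, $\mathcal N_j(s)\in\mathbb C^{n\times n}$, and $\mathcal H:\mathbb C\times\mathbb C\to\mathbb C^{n\times n^2}$. Its structured symmetric subsystem transfer functions are $G_1(s_1)=\mathcal C(s_1)g_1(s_1)$, $G_2(s_1,s_2)=\mathcal C(s_1+s_2)g_2(s_1,s_2)$, $G_3(s_1,s_2,s_3)=\mathcal C(s_1+s_2+s_3)g_3(s_1,s_2,s_3)$, where $g_1(s_1)=\mathcal K(s_1)^{-1}\mathcal B(s_1)$, $g_2(s_1,s_2)=\tfrac12\mathcal K(s_1+s_2)^{-1}\big(\mathcal H(s_1,s_2)(g_1(s_1)\otimes g_1(s_2))+\mathcal H(s_2,s_1)(g_1(s_2)\otimes g_1(s_1))+\mathcal N(s_1)(I_m\otimes g_1(s_1))+\mathcal N(s_2)(I_m\otimes g_1(s_2))\big)$, $g_3(s_1,s_2,s_3)=\tfrac16\mathcal K(s_1+s_2+s_3)^{-1}\big(\mathcal H(s_1+s_2,s_3)(g_2(s_1,s_2)\otimes g_1(s_3))+\mathcal H(s_1+s_3,s_2)(g_2(s_1,s_3)\otimes g_1(s_2))+\mathcal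 H(s_2+s_3,s_1)(g_2(s_2,s_3)\otimes g_1(s_1))+\mathcal H(s_1,s_2+s_3)(g_1(s_1)\otimes g_2(s_2,s_3))+\mathcal H(s_2,s_1+s_3)(g_1(s_2)\otimes g_2(s_1,s_3))+\mathcal H(s_3,s_1+s_2)(g_1(s_3)\otimes g_2(s_1,s_2))+\mathcal N(s_1+s_2)(I_m\otimes g_2(s_1,s_2))+\mathcal N(s_1+s_3)(I_m\otimes g_2(s_1,s_3))+\mathcal N(s_2+s_3)(I_m\otimes g_2(s_2,s_3))\big)$, wherever the inverses exist; $\otimes$ is the Kronecker product. The reduced-order system obtained by projection with $V,W\in\mathbb C^{n\times r}$ is given by $\widehat{\mathcal C}(s)=\mathcal C(s)V$, $\widehat{\mathcal K}(s)=W^{\mathsf H}\mathcal K(s)V$, $\widehat{\mathcal B}(s)=W^{\mathsf H}\mathcal B(s)$, $\widehat{\mathcal N}(s)=W^{\mathsf H}\mathcal N(s)(I_m\otimes V)$, $\widehat{\mathcal H}(s_1,s_2)=W^{\mathsf H}\mathcal H(s_1,s_2)(V\otimes V)$, where $W^{\mathsf H}$ is the conjugate transpose and $\mathcal K(s)^{-\mathsf H}=(\mathcal K(s)^{-1})^{\mathsf H}$; its transfer functions $\widehat G_k$ are defined by the same formulas with hatted functions. *)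

theory Defs
  imports "Jordan_Normal_Form.Schur_Decomposition" "Jordan_Normal_Form.DL_Rank" "Jordan_Normal_Form.Gauss_Jordan_Elimination"
begin

definition kron :: "complex mat \<Rightarrow> complex mat \<Rightarrow> complex mat" where
  "kron A B = mat (dim_row A * dim_row B) (dim_col A * dim_col B)
     (\<lambda>(i,j). A $$ (i div dim_row B, j div dim_col B) * B $$ (i mod dim_row B, j mod dim_col B))"

text \<open>Matrix inverse (meaningful for invertible square matrices).\<close>
definition minv :: "complex mat \<Rightarrow> complex mat" where
  "minv A = the (mat_inverse A)"

abbreviation ctr :: "complex mat \<Rightarrow> complex mat" where
  "ctr A \<equiv> mat_adjoint A"

abbreviation colspan :: "nat \<Rightarrow> complex mat \<Rightarrow> complex vec set" where
  "colspan n A \<equiv> vec_space.col_space n A"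

definition hcat :: "nat \<Rightarrow> complex mat list \<Rightarrow> complex mat" where
  "hcat n As = mat_of_cols n (concat (map cols As))"

text \<open>Structured symmetric subsystem transfer functions (state parts g_k and outputs G_k).
  Argument order: C K B N H, and m the number of inputs.\<close>

definition sg1 :: "(complex \<Rightarrow> complex mat) \<Rightarrow> (complex \<Rightarrow> complex mat) \<Rightarrow> complex \<Rightarrow> complex mat" where
  "sg1 K B s1 = minv (K s1) * B s1"

definition sg2 :: "(complex \<Rightarrow> complex mat) \<Rightarrow> (complex \<Rightarrow> complex mat) \<Rightarrow> (complex \<Rightarrow> complex mat)
   \<Rightarrow> (complex \<Rightarrow> complex \<Rightarrow> complex mat) \<Rightarrow> nat \<Rightarrow> complex \<Rightarrow> complex \<Rightarrow> complex mat" where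
  "sg2 K B N H m s1 s2 = (1/2 :: complex) \<cdot>\<^sub>m (minv (K (s1 + s2)) *
     (H s1 s2 * kron (sg1 K B s1) (sg1 K B s2) + H s2 s1 * kron (sg1 K B s2) (sg1 K B s1)
      + N s1 * kron (1\<^sub>m m) (sg1 K B s1) + N s2 * kron (1\<^sub>m m) (sg1 K B s2)))"

definition sg3 :: "(complex \<Rightarrow> complex mat) \<Rightarrow> (complex \<Rightarrow> complex mat) \<Rightarrow> (complex \<Rightarrow> complex mat)
   \<Rightarrow> (complex \<Rightarrow> complex \<Rightarrow> complex mat) \<Rightarrow> nat \<Rightarrow> complex \<Rightarrow> complex \<Rightarrow> complex \<Rightarrow> complex mat" where
  "sg3 K B N H m s1 s2 s3 = (1/6 :: complex) \<cdot>\<^sub>m (minv (K (s1 + s2 + s3)) *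
     (H (s1 + s2) s3 * kron (sg2 K B N H m s1 s2) (sg1 K B s3)
      + H (s1 + s3) s2 * kron (sg2 K B N H m s1 s3) (sg1 K B s2)
      + H (s2 + s3) s1 * kron (sg2 K B N H m s2 s3) (sg1 K B s1)
      + H s1 (s2 + s3) * kron (sg1 K B s1) (sg2 K B N H m s2 s3)
      + H s2 (s1 + s3) * kron (sg1 K B s2) (sg2 K B N H m s1 s3)
      + H s3 (s1 + s2) * kron (sg1 K B s3) (sg2 K B N H m s1 s2)
      + N (s1 + s2) * kron (1\<^sub>m m) (sg2 K B N H m s1 s2)
      + N (s1 + s3) * kron (1\<^sub>m m) (sg2 K B N H m s1 s3)
      + N (s2 + s3) * kron (1\<^sub>m m) (sg2 K B N H m s2 s3)))"

definition TF1 :: "(complex \<Rightarrow> complex mat) \<Rightarrow> (complex \<Rightarrow> complex mat) \<Rightarrow> (complex \<Rightarrow> complex mat)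
   \<Rightarrow> complex \<Rightarrow> complex mat" where
  "TF1 C K B s1 = C s1 * sg1 K B s1"

definition TF2 :: "(complex \<Rightarrow> complex mat) \<Rightarrow> (complex \<Rightarrow> complex mat) \<Rightarrow> (complex \<Rightarrow> complex mat)
   \<Rightarrow> (complex \<Rightarrow> complex mat) \<Rightarrow> (complex \<Rightarrow> complex \<Rightarrow> complex mat) \<Rightarrow> nat
   \<Rightarrow> complex \<Rightarrow> complex \<Rightarrow> complex mat" where
  "TF2 C K B N H m s1 s2 = C (s1 + s2) * sg2 K B N H m s1 s2"

definition TF3 :: "(complex \<Rightarrow> complex mat) \<Rightarrow> (complex \<Rightarrow> complex mat) \<Rightarrow> (complex \<Rightarrow> complex mat)
   \<Rightarrow> (complex \<Rightarrow> complex mat) \<Rightarrow> (complex \<Rightarrow> complex \<Rightarrow> complex mat) \<Rightarrow> nat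
   \<Rightarrow> complex \<Rightarrow> complex \<Rightarrow> complex \<Rightarrow> complex mat" where
  "TF3 C K B N H m s1 s2 s3 = C (s1 + s2 + s3) * sg3 K B N H m s1 s2 s3"

definition redC :: "(complex \<Rightarrow> complex mat) \<Rightarrow> complex mat \<Rightarrow> complex \<Rightarrow> complex mat" where
  "redC C V s = C s * V"
definition redK :: "(complex \<Rightarrow> complex mat) \<Rightarrow> complex mat \<Rightarrow> complex mat \<Rightarrow> complex \<Rightarrow> complex mat" where
  "redK K V W s = ctr W * K s * V"
definition redB :: "(complex \<Rightarrow> complex mat) \<Rightarrow> complex mat \<Rightarrow> complex \<Rightarrow> complex mat" where
  "redB B W s = ctr W * B s"
definition redN :: "(complex \<Rightarrow> complex mat) \<Rightarrow> nat \<Rightarrow> complex mat \<Rightarrow> complex mat \<Rightarrow> complex \<Rightarrow> complex mat" where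
  "redN N m V W s = ctr W * N s * kron (1\<^sub>m m) V"
definition redH :: "(complex \<Rightarrow> complex \<Rightarrow> complex mat) \<Rightarrow> complex mat \<Rightarrow> complex mat
   \<Rightarrow> complex \<Rightarrow> complex \<Rightarrow> complex mat" where
  "redH H V W s1 s2 = ctr W * H s1 s2 * kron V V"

end

theory Submission
  imports Defs
begin

text \<open>At the symmetric points the k-th transfer function is a multiple of an output response
  C(k\<sigma>) K(k\<sigma>)^-1 R, whose right-hand side R is built from the lower-order states g1(\<sigma>) and
  g2(\<sigma>,\<sigma>). A Petrov-Galerkin projection reproduces such a response exactly as soon as either the
  state K^-1 R lies in the span of V (the reduced state is then its coordinate vector) or the dual
  state K^-H C^H lies in the span of W. Once the lower-order states lie in the span of V, the
  reduced system reproduces them, so its right-hand side is W^H R; each moment in (a)-(c) is then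
  matched by one of the two conditions.\<close>

lemma invertible_mat_minv:
  fixes A :: "complex mat"
  assumes A: "A \<in> carrier_mat k k" and inv: "invertible_mat A"
  shows "A * minv A = 1\<^sub>m k" "minv A * A = 1\<^sub>m k" "minv A \<in> carrier_mat k k"
proof -
  from inv obtain B where AB: "A * B = 1\<^sub>m k" and BA: "B * A = 1\<^sub>m (dim_row B)"
    unfolding invertible_mat_def inverts_mat_def using A by auto
  have B: "B \<in> carrier_mat k k"
    using AB BA A by (metis carrier_matD carrier_matI index_mult_mat(2,3) index_one_mat(2,3))
  have "A \<in> Units (ring_mat TYPE(complex) k ())"
    unfolding Units_def using A B AB BA by (auto simp: ring_mat_simps)
  then obtain M where "mat_inverse A = Some M"
    using mat_inverse(1)[OF A, where b="()"] by (cases "mat_inverse A") auto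
  with mat_inverse(2)[OF A this]
  show "A * minv A = 1\<^sub>m k" "minv A * A = 1\<^sub>m k" "minv A \<in> carrier_mat k k"
    unfolding minv_def by auto
qed

lemma assoc_mult_mat_dim:
  assumes "dim_col A = dim_row B" "dim_col B = dim_row C"
  shows "A * B * C = A * (B * C)"
  by (rule assoc_mult_mat[of A "dim_row A" "dim_col A" B "dim_col B" C "dim_col C"]) (use assms in auto)

lemma smult_smult_mat: "a \<cdot>\<^sub>m (b \<cdot>\<^sub>m A) = (a * b) \<cdot>\<^sub>m (A :: 'a :: semigroup_mult mat)"
  by (rule eq_matI) (simp_all add: mult.assoc)

lemma one_smult_mat: "(1 :: 'a :: monoid_mult) \<cdot>\<^sub>m A = A"
  by (rule eq_matI) simp_all

lemma mult_minv_cancel: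
  assumes "A \<in> carrier_mat k k" "invertible_mat A" "R \<in> carrier_mat k q"
  shows "A * (minv A * R) = R"
  using invertible_mat_minv[OF assms(1,2)] assms by (simp add: assoc_mult_mat[symmetric])

lemma sum_lessThan_mult_div_mod:
  fixes f :: "nat \<Rightarrow> nat \<Rightarrow> 'a::comm_monoid_add"
  shows "(\<Sum>k<a*b. f (k div b) (k mod b)) = (\<Sum>i<a. \<Sum>j<b. f i j)"
proof (induction a)
  case (Suc a)
  have split: "{..<Suc a * b} = {..<a*b} \<union> {a*b..<a*b+b}" by auto
  have "(\<Sum>k<Suc a*b. f (k div b) (k mod b))
      = (\<Sum>k<a*b. f (k div b) (k mod b)) + (\<Sum>k\<in>{a*b..<a*b+b}. f (k div b) (k mod b))"
    unfolding split by (subst sum.union_disjoint) auto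
  also have "(\<Sum>k\<in>{a*b..<a*b+b}. f (k div b) (k mod b)) = (\<Sum>j<b. f ((a*b+j) div b) ((a*b+j) mod b))"
    using sum.shift_bounds_nat_ivl[of "\<lambda>k. f (k div b) (k mod b)" 0 "a*b" b]
    by (simp add: atLeast0LessThan add.commute)
  also have "(\<Sum>j<b. f ((a*b+j) div b) ((a*b+j) mod b)) = (\<Sum>j<b. f a j)"
    by (rule sum.cong) auto
  finally show ?case using Suc by simp
qed simp

lemma kron_carrier_mat:
  "A \<in> carrier_mat a b \<Longrightarrow> B \<in> carrier_mat c d \<Longrightarrow> kron A B \<in> carrier_mat (a * c) (b * d)"
  unfolding kron_def by auto

lemma kron_one_carrier_mat:
  "B \<in> carrier_mat c d \<Longrightarrow> kron (1\<^sub>m m) B \<in> carrier_mat (c * m) (m * d)"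
  using kron_carrier_mat[OF one_carrier_mat] by (metis mult.commute)

lemma kron_mult_kron:
  assumes A: "A \<in> carrier_mat a1 a2" and B: "B \<in> carrier_mat b1 b2"
    and C: "C \<in> carrier_mat a2 c2" and D: "D \<in> carrier_mat b2 d2"
  shows "kron A B * kron C D = kron (A * C) (B * D)"
proof (rule eq_matI)
  fix i j assume "i < dim_row (kron (A * C) (B * D))" "j < dim_col (kron (A * C) (B * D))"
  then have i: "i < a1 * b1" and j: "j < c2 * d2" using A B C D by (auto simp: kron_def)
  then have "b1 > 0" "d2 > 0" by (auto intro: gr0I)
  then have bounds: "i div b1 < a1" "j div d2 < c2" "i mod b1 < b1" "j mod d2 < d2"
    using i j by (auto simp: less_mult_imp_div_less)
  have "(kron A B * kron C D) $$ (i, j) = (\<Sum>k<a2*b2. kron A B $$ (i, k) * kron C D $$ (k, j))"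
    using i j A B C D by (simp add: kron_def scalar_prod_def atLeast0LessThan)
  also have "\<dots> = (\<Sum>k<a2*b2. (A $$ (i div b1, k div b2) * C $$ (k div b2, j div d2))
                              * (B $$ (i mod b1, k mod b2) * D $$ (k mod b2, j mod d2)))"
    by (rule sum.cong) (use i j A B C D in \<open>auto simp: kron_def\<close>)
  also have "\<dots> = (\<Sum>k1<a2. \<Sum>k2<b2. (A $$ (i div b1, k1) * C $$ (k1, j div d2))
                              * (B $$ (i mod b1, k2) * D $$ (k2, j mod d2)))"
    by (rule sum_lessThan_mult_div_mod)
  also have "\<dots> = (\<Sum>k1<a2. A $$ (i div b1, k1) * C $$ (k1, j div d2))
                  * (\<Sum>k2<b2. B $$ (i mod b1, k2) * D $$ (k2, j mod d2))"
    by (simp add: sum_product)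
  also have "\<dots> = kron (A * C) (B * D) $$ (i, j)"
    using i j A B C D bounds by (simp add: kron_def scalar_prod_def atLeast0LessThan)
  finally show "(kron A B * kron C D) $$ (i, j) = kron (A * C) (B * D) $$ (i, j)" .
qed (use A B C D in \<open>simp_all add: kron_def\<close>)

lemma adjoint_carrier_mat: "A \<in> carrier_mat a b \<Longrightarrow> ctr A \<in> carrier_mat b a"
  unfolding mat_adjoint_def by auto

lemma adjoint_index: "A \<in> carrier_mat a b \<Longrightarrow> i < b \<Longrightarrow> j < a \<Longrightarrow> ctr A $$ (i, j) = cnj (A $$ (j, i))"
  unfolding mat_adjoint_def by (auto simp: mat_of_rows_def)

lemma adjoint_adjoint: "A \<in> carrier_mat a b \<Longrightarrow> ctr (ctr A) = A"
  by (rule eq_matI)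
    (auto simp: adjoint_index[OF adjoint_carrier_mat] adjoint_index adjoint_carrier_mat dest: adjoint_carrier_mat)

lemma adjoint_mult:
  assumes A: "A \<in> carrier_mat a b" and B: "B \<in> carrier_mat b c"
  shows "ctr (A * B) = ctr B * ctr A"
proof (rule eq_matI)
  fix i j assume "i < dim_row (ctr B * ctr A)" "j < dim_col (ctr B * ctr A)"
  then have "i < c" "j < a" using adjoint_carrier_mat[OF A] adjoint_carrier_mat[OF B] by auto
  then show "ctr (A * B) $$ (i, j) = (ctr B * ctr A) $$ (i, j)"
    using A B adjoint_carrier_mat[OF A] adjoint_carrier_mat[OF B]
    by (simp add: adjoint_index[OF mult_carrier_mat[OF A B]] adjoint_index[OF A] adjoint_index[OF B]
        scalar_prod_def mult.commute)
qed (use adjoint_carrier_mat[OF A] adjoint_carrier_mat[OF B]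
       adjoint_carrier_mat[OF mult_carrier_mat[OF A B]] in auto)

lemma col_space_subset_factor:
  assumes A: "A \<in> carrier_mat n k" and M: "M \<in> carrier_mat n r"
    and sub: "colspan n A \<subseteq> colspan n M"
  obtains Y where "Y \<in> carrier_mat r k" "A = M * Y"
proof -
  interpret vec_space "TYPE(complex)" n .
  have "\<exists>y\<in>carrier_vec r. M *\<^sub>v y = col A j" if j: "j < k" for j
  proof -
    have "col A j \<in> col_space A"
      unfolding col_space_def using j A by (intro span_mem) (auto simp: cols_def)
    with sub show ?thesis using col_space_eq[OF M] M by auto
  qed
  then obtain y where y: "\<And>j. j < k \<Longrightarrow> y j \<in> carrier_vec r \<and> M *\<^sub>v y j = col A j"
    by metis
  define Y where "Y = mat_of_cols r (map y [0..<k])"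
  have Y: "Y \<in> carrier_mat r k" unfolding Y_def by auto
  have "A = M * Y"
  proof (rule mat_col_eqI)
    fix j assume "j < dim_col (M * Y)"
    then have j: "j < k" using Y by simp
    have "col (M * Y) j = M *\<^sub>v col Y j" by (rule col_mult2[OF M Y j])
    then show "col A j = col (M * Y) j" using y j by (simp add: Y_def)
  qed (use A M Y in auto)
  with Y that show ?thesis by blast
qed

lemma col_space_hcat_subset:
  assumes dims: "\<And>A. A \<in> set As \<Longrightarrow> dim_row A = n" and A: "A \<in> set As"
    and sub: "colspan n (hcat n As) \<subseteq> S"
  shows "colspan n A \<subseteq> S"
proof -
  interpret vec_space "TYPE(complex)" n .
  have "set (concat (map cols As)) \<subseteq> carrier_vec n"
  proof
    fix v assume "v \<in> set (concat (map cols As))"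
    then obtain B where "B \<in> set As" "v \<in> set (cols B)" by auto
    then show "v \<in> carrier_vec n" using cols_dim[of B] dims by auto
  qed
  then have "cols (hcat n As) = concat (map cols As)"
    unfolding hcat_def by simp
  then have "set (cols A) \<subseteq> set (cols (hcat n As))" using A by auto
  then have "colspan n A \<subseteq> colspan n (hcat n As)"
    unfolding col_space_def by (rule span_is_monotone)
  with sub show ?thesis by blast
qed

lemma projected_solve_state_in_span:
  assumes K: "K \<in> carrier_mat n n" "invertible_mat K"
    and V: "V \<in> carrier_mat n r" and W: "W \<in> carrier_mat n r"
    and Kr: "invertible_mat (ctr W * K * V)"
    and R: "R \<in> carrier_mat n q" and Y: "Y \<in> carrier_mat r q"
    and span: "minv K * R = V * Y"
  shows "minv (ctr W * K * V) * (ctr W * R) = Y"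
proof -
  have Wc: "ctr W \<in> carrier_mat r n" using adjoint_carrier_mat[OF W] .
  define Kr where "Kr = ctr W * K * V"
  have Krc: "Kr \<in> carrier_mat r r" using Wc K V by (auto simp: Kr_def)
  note Kr_minv = invertible_mat_minv[OF Krc Kr[folded Kr_def]]
  note dims = carrier_matD[OF Wc] carrier_matD[OF K(1)] carrier_matD[OF V] carrier_matD[OF Y]
    carrier_matD[OF Kr_minv(3)]
  have "R = K * (V * Y)" using mult_minv_cancel[OF K R] span by simp
  then have "ctr W * R = Kr * Y"
    by (simp add: Kr_def assoc_mult_mat_dim dims)
  then have "minv Kr * (ctr W * R) = (minv Kr * Kr) * Y"
    using Krc by (simp add: assoc_mult_mat_dim dims)
  then show ?thesis using Kr_minv(2) Y by (simp add: Kr_def)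
qed

lemma projected_solve_dual_in_span:
  assumes C: "C \<in> carrier_mat p n" and K: "K \<in> carrier_mat n n" "invertible_mat K"
    and V: "V \<in> carrier_mat n r" and W: "W \<in> carrier_mat n r"
    and Kr: "invertible_mat (ctr W * K * V)"
    and R: "R \<in> carrier_mat n q" and Z: "Z \<in> carrier_mat r p"
    and span: "ctr (minv K) * ctr C = W * Z"
  shows "(C * V) * (minv (ctr W * K * V) * (ctr W * R)) = C * (minv K * R)"
proof -
  note K_minv = invertible_mat_minv[OF K]
  have Wc: "ctr W \<in> carrier_mat r n" and Zc: "ctr Z \<in> carrier_mat p r"
    using adjoint_carrier_mat[OF W] adjoint_carrier_mat[OF Z] .
  define Kr where "Kr = ctr W * K * V"
  have Krc: "Kr \<in> carrier_mat r r" using Wc K V by (auto simp: Kr_def)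
  note Kr_minv = invertible_mat_minv[OF Krc Kr[folded Kr_def]]
  have CK: "C * minv K = ctr Z * ctr W"
    using arg_cong[OF span, of ctr]
    by (simp add: adjoint_mult[OF adjoint_carrier_mat[OF K_minv(3)] adjoint_carrier_mat[OF C]]
        adjoint_mult[OF W Z] adjoint_adjoint[OF C] adjoint_adjoint[OF K_minv(3)])
  note dims = carrier_matD[OF C] carrier_matD[OF K(1)] carrier_matD[OF V] carrier_matD[OF Wc]
    carrier_matD[OF Zc] carrier_matD[OF R] carrier_matD[OF K_minv(3)] carrier_matD[OF Kr_minv(3)]
  have "C = (C * minv K) * K" using K_minv(2) C by (simp add: assoc_mult_mat_dim dims)
  then have "C * V = ctr Z * Kr" unfolding CK Kr_def by (simp add: assoc_mult_mat_dim dims)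
  then have "(C * V) * (minv Kr * (ctr W * R)) = ctr Z * (Kr * minv Kr) * (ctr W * R)"
    using Krc by (simp add: assoc_mult_mat_dim dims)
  also have "\<dots> = (C * minv K) * R" unfolding Kr_minv(1) CK using Zc by (simp add: assoc_mult_mat_dim dims)
  finally show ?thesis by (simp add: Kr_def assoc_mult_mat_dim dims)
qed

lemma projected_response_eq:
  assumes C: "C \<in> carrier_mat p n" and K: "K \<in> carrier_mat n n" "invertible_mat K"
    and V: "V \<in> carrier_mat n r" and W: "W \<in> carrier_mat n r"
    and Kr: "invertible_mat (ctr W * K * V)" and R: "R \<in> carrier_mat n q"
    and span: "colspan n (minv K * R) \<subseteq> colspan n V
               \<or> colspan n (ctr (minv K) * ctr C) \<subseteq> colspan n W"
  shows "(C * V) * (minv (ctr W * K * V) * (ctr W * R)) = C * (minv K * R)"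
  using span
proof
  assume "colspan n (minv K * R) \<subseteq> colspan n V"
  moreover have "minv K * R \<in> carrier_mat n q" using invertible_mat_minv[OF K] R by simp
  ultimately obtain Y where Y: "Y \<in> carrier_mat r q" "minv K * R = V * Y"
    using col_space_subset_factor[OF _ V] by blast
  then show ?thesis
    using projected_solve_state_in_span[OF K V W Kr R Y] C V by (simp add: assoc_mult_mat)
next
  assume "colspan n (ctr (minv K) * ctr C) \<subseteq> colspan n W"
  moreover have "ctr (minv K) * ctr C \<in> carrier_mat n p"
    using adjoint_carrier_mat invertible_mat_minv[OF K] C by (metis mult_carrier_mat)
  ultimately obtain Z where "Z \<in> carrier_mat r p" "ctr (minv K) * ctr C = W * Z"
    using col_space_subset_factor[OF _ W] by blast
  then show ?thesis using projected_solve_dual_in_span[OF C K V W Kr R] by blast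
qed

definition diag_rhs2 :: "(complex \<Rightarrow> complex mat) \<Rightarrow> (complex \<Rightarrow> complex \<Rightarrow> complex mat) \<Rightarrow> nat
    \<Rightarrow> complex \<Rightarrow> complex mat \<Rightarrow> complex mat" where
  "diag_rhs2 N H m s X = H s s * kron X X + N s * kron (1\<^sub>m m) X"

definition diag_rhs3 :: "(complex \<Rightarrow> complex mat) \<Rightarrow> (complex \<Rightarrow> complex \<Rightarrow> complex mat) \<Rightarrow> nat
    \<Rightarrow> complex \<Rightarrow> complex mat \<Rightarrow> complex mat \<Rightarrow> complex mat" where
  "diag_rhs3 N H m s X1 X2 =
     H (s + s) s * kron X2 X1 + H s (s + s) * kron X1 X2 + N (s + s) * kron (1\<^sub>m m) X2"

lemma diag_rhs2_carrier_mat: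
  assumes "X \<in> carrier_mat k m" "H s s \<in> carrier_mat k (k * k)" "N s \<in> carrier_mat k (k * m)"
  shows "diag_rhs2 N H m s X \<in> carrier_mat k (m * m)"
  using assms kron_carrier_mat[OF assms(1,1)] kron_one_carrier_mat[where m=m, OF assms(1)]
  unfolding diag_rhs2_def by (metis add_carrier_mat mult_carrier_mat)

lemma diag_rhs3_carrier_mat:
  assumes "X1 \<in> carrier_mat k m" "X2 \<in> carrier_mat k (m * m)"
    "H (s + s) s \<in> carrier_mat k (k * k)" "H s (s + s) \<in> carrier_mat k (k * k)"
    "N (s + s) \<in> carrier_mat k (k * m)"
  shows "diag_rhs3 N H m s X1 X2 \<in> carrier_mat k (m * m * m)"
proof -
  have "kron X2 X1 \<in> carrier_mat (k * k) (m * m * m)" "kron X1 X2 \<in> carrier_mat (k * k) (m * m * m)"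
    using kron_carrier_mat[OF assms(2,1)] kron_carrier_mat[OF assms(1,2)] by (simp_all add: ac_simps)
  moreover have "kron (1\<^sub>m m) X2 \<in> carrier_mat (k * m) (m * m * m)"
    using kron_one_carrier_mat[where m=m, OF assms(2)] by (simp add: ac_simps)
  ultimately show ?thesis
    using assms(3-) unfolding diag_rhs3_def by (metis add_carrier_mat mult_carrier_mat)
qed

text \<open>At a symmetric point the summands of g2 and g3 coincide in pairs, resp. triples, which
  turns the prefactor 1/2 into 1 and 1/6 into 1/2.\<close>
lemma sg2_diag:
  assumes "sg1 K B s \<in> carrier_mat k m" "minv (K (s + s)) \<in> carrier_mat k k"
    "H s s \<in> carrier_mat k (k * k)" "N s \<in> carrier_mat k (k * m)"
  shows "sg2 K B N H m s s = minv (K (s + s)) * diag_rhs2 N H m s (sg1 K B s)"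
proof -
  define X where "X = H s s * kron (sg1 K B s) (sg1 K B s)"
  define Y where "Y = N s * kron (1\<^sub>m m) (sg1 K B s)"
  have X: "X \<in> carrier_mat k (m * m)" and Y: "Y \<in> carrier_mat k (m * m)"
    unfolding X_def Y_def using assms kron_carrier_mat[OF assms(1,1)] kron_one_carrier_mat[where m=m, OF assms(1)]
    by (metis mult_carrier_mat)+
  then have XY: "X + Y \<in> carrier_mat k (m * m)" by simp
  have "X + X + Y + Y = (2::complex) \<cdot>\<^sub>m (X + Y)"
    by (rule eq_matI) (use X Y in \<open>auto simp: algebra_simps\<close>)
  then have "sg2 K B N H m s s = (1/2::complex) \<cdot>\<^sub>m ((2::complex) \<cdot>\<^sub>m (minv (K (s + s)) * (X + Y)))"
    unfolding sg2_def X_def[symmetric] Y_def[symmetric]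
    using mult_smult_distrib[OF assms(2) XY] by simp
  then show ?thesis by (simp add: smult_smult_mat one_smult_mat X_def Y_def diag_rhs2_def)
qed

lemma sg3_diag:
  assumes g1: "sg1 K B s \<in> carrier_mat k m" and g2: "sg2 K B N H m s s \<in> carrier_mat k (m * m)"
    and K: "minv (K (s + s + s)) \<in> carrier_mat k k"
    and H: "H (s + s) s \<in> carrier_mat k (k * k)" "H s (s + s) \<in> carrier_mat k (k * k)"
    and N: "N (s + s) \<in> carrier_mat k (k * m)"
  shows "sg3 K B N H m s s s
    = (1/2 :: complex) \<cdot>\<^sub>m (minv (K (s + s + s)) * diag_rhs3 N H m s (sg1 K B s) (sg2 K B N H m s s))"
proof -
  define X where "X = H (s + s) s * kron (sg2 K B N H m s s) (sg1 K B s)"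
  define Y where "Y = H s (s + s) * kron (sg1 K B s) (sg2 K B N H m s s)"
  define Z where "Z = N (s + s) * kron (1\<^sub>m m) (sg2 K B N H m s s)"
  have "kron (sg2 K B N H m s s) (sg1 K B s) \<in> carrier_mat (k * k) (m * m * m)"
    "kron (sg1 K B s) (sg2 K B N H m s s) \<in> carrier_mat (k * k) (m * m * m)"
    "kron (1\<^sub>m m) (sg2 K B N H m s s) \<in> carrier_mat (k * m) (m * m * m)"
    using kron_carrier_mat[OF g2 g1] kron_carrier_mat[OF g1 g2] kron_one_carrier_mat[where m=m, OF g2]
    by (simp_all add: ac_simps)
  then have X: "X \<in> carrier_mat k (m * m * m)" and Y: "Y \<in> carrier_mat k (m * m * m)"
    and Z: "Z \<in> carrier_mat k (m * m * m)"
    unfolding X_def Y_def Z_def using H N by (metis mult_carrier_mat)+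
  then have XYZ: "X + Y + Z \<in> carrier_mat k (m * m * m)" by simp
  have "X + X + X + Y + Y + Y + Z + Z + Z = (3::complex) \<cdot>\<^sub>m (X + Y + Z)"
    by (rule eq_matI) (use X Y Z in \<open>auto simp: algebra_simps\<close>)
  then have "sg3 K B N H m s s s = (1/6::complex) \<cdot>\<^sub>m ((3::complex) \<cdot>\<^sub>m (minv (K (s + s + s)) * (X + Y + Z)))"
    unfolding sg3_def X_def[symmetric] Y_def[symmetric] Z_def[symmetric]
    using mult_smult_distrib[OF K XYZ] by simp
  then show ?thesis by (simp add: smult_smult_mat X_def Y_def Z_def diag_rhs3_def)
qed

lemma adjoint_mult_kron_mult_kron:
  assumes W: "W \<in> carrier_mat n r" and M: "M \<in> carrier_mat n (a * b)"
    and A: "A \<in> carrier_mat a a'" and B: "B \<in> carrier_mat b b'"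
    and Y: "Y \<in> carrier_mat a' c" and Z: "Z \<in> carrier_mat b' d"
  shows "ctr W * M * kron A B * kron Y Z = ctr W * (M * kron (A * Y) (B * Z))"
proof -
  have WM: "ctr W * M \<in> carrier_mat r (a * b)" using adjoint_carrier_mat[OF W] M by simp
  have "ctr W * M * kron A B * kron Y Z = ctr W * M * kron (A * Y) (B * Z)"
    using assoc_mult_mat[OF WM kron_carrier_mat[OF A B] kron_carrier_mat[OF Y Z]]
    by (simp add: kron_mult_kron[OF A B Y Z])
  also have "\<dots> = ctr W * (M * kron (A * Y) (B * Z))"
    using adjoint_carrier_mat[OF W] M kron_carrier_mat[OF mult_carrier_mat[OF A Y] mult_carrier_mat[OF B Z]]
    by simp
  finally show ?thesis .
qed

lemma diag_rhs2_reduced: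
  assumes W: "W \<in> carrier_mat n r" and V: "V \<in> carrier_mat n r" and Y: "Y \<in> carrier_mat r m"
    and H: "H s s \<in> carrier_mat n (n * n)" and N: "N s \<in> carrier_mat n (n * m)"
  shows "diag_rhs2 (redN N m V W) (redH H V W) m s Y = ctr W * diag_rhs2 N H m s (V * Y)"
proof -
  have VY: "V * Y \<in> carrier_mat n m" using V Y by simp
  have "H s s * kron (V * Y) (V * Y) \<in> carrier_mat n (m * m)"
    "N s * kron (1\<^sub>m m) (V * Y) \<in> carrier_mat n (m * m)"
    using mult_carrier_mat[OF H kron_carrier_mat[OF VY VY]]
      mult_carrier_mat[OF N[unfolded mult.commute[of n]] kron_carrier_mat[OF one_carrier_mat VY]] .
  then show ?thesis
    unfolding diag_rhs2_def redH_def redN_def adjoint_mult_kron_mult_kron[OF W H V V Y Y]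
      adjoint_mult_kron_mult_kron[OF W N[unfolded mult.commute[of n]] one_carrier_mat V one_carrier_mat Y]
    using adjoint_carrier_mat[OF W] by (simp add: mult_add_distrib_mat)
qed

lemma diag_rhs3_reduced:
  assumes W: "W \<in> carrier_mat n r" and V: "V \<in> carrier_mat n r"
    and Y1: "Y1 \<in> carrier_mat r m" and Y2: "Y2 \<in> carrier_mat r (m * m)"
    and H: "H (s + s) s \<in> carrier_mat n (n * n)" "H s (s + s) \<in> carrier_mat n (n * n)"
    and N: "N (s + s) \<in> carrier_mat n (n * m)"
  shows "diag_rhs3 (redN N m V W) (redH H V W) m s Y1 Y2 = ctr W * diag_rhs3 N H m s (V * Y1) (V * Y2)"
proof -
  have VY1: "V * Y1 \<in> carrier_mat n m" and VY2: "V * Y2 \<in> carrier_mat n (m * m)" using V Y1 Y2 by auto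
  have "H (s + s) s * kron (V * Y2) (V * Y1) \<in> carrier_mat n (m * m * m)"
    "H s (s + s) * kron (V * Y1) (V * Y2) \<in> carrier_mat n (m * m * m)"
    "N (s + s) * kron (1\<^sub>m m) (V * Y2) \<in> carrier_mat n (m * m * m)"
    using mult_carrier_mat[OF H(1) kron_carrier_mat[OF VY2 VY1]]
      mult_carrier_mat[OF H(2) kron_carrier_mat[OF VY1 VY2]]
      mult_carrier_mat[OF N[unfolded mult.commute[of n]] kron_carrier_mat[OF one_carrier_mat VY2]]
    by (simp_all add: ac_simps)
  then show ?thesis
    unfolding diag_rhs3_def redH_def redN_def adjoint_mult_kron_mult_kron[OF W H(1) V V Y2 Y1]
      adjoint_mult_kron_mult_kron[OF W H(2) V V Y1 Y2]
      adjoint_mult_kron_mult_kron[OF W N[unfolded mult.commute[of n]] one_carrier_mat V one_carrier_mat Y2]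
    using adjoint_carrier_mat[OF W]
    by (simp add: mult_add_distrib_mat) (rule assoc_add_mat; rule mult_carrier_mat; assumption)
qed

locale projected_qb_system =
  fixes n m p r :: nat
    and C K B N :: "complex \<Rightarrow> complex mat"
    and H :: "complex \<Rightarrow> complex \<Rightarrow> complex mat"
    and V W :: "complex mat"
    and s :: complex
  assumes C_carrier: "\<And>t. t \<in> {s, s + s, s + s + s} \<Longrightarrow> C t \<in> carrier_mat p n"
    and K_carrier: "\<And>t. t \<in> {s, s + s, s + s + s} \<Longrightarrow> K t \<in> carrier_mat n n"
    and B_carrier: "\<And>t. t \<in> {s, s + s, s + s + s} \<Longrightarrow> B t \<in> carrier_mat n m"
    and N_carrier: "\<And>t. t \<in> {s, s + s, s + s + s} \<Longrightarrow> N t \<in> carrier_mat n (n * m)"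
    and H_carrier: "\<And>t1 t2. (t1, t2) \<in> {(s, s), (s + s, s), (s, s + s)}
                      \<Longrightarrow> H t1 t2 \<in> carrier_mat n (n * n)"
    and K_invertible: "\<And>t. t \<in> {s, s + s, s + s + s} \<Longrightarrow> invertible_mat (K t)"
    and V_carrier: "V \<in> carrier_mat n r"
    and W_carrier: "W \<in> carrier_mat n r"
    and reduced_K_invertible: "\<And>t. t \<in> {s, s + s, s + s + s} \<Longrightarrow> invertible_mat (ctr W * K t * V)"
begin

abbreviation "Cr \<equiv> redC C V"
abbreviation "Kr \<equiv> redK K V W"
abbreviation "Br \<equiv> redB B W"
abbreviation "Nr \<equiv> redN N m V W"
abbreviation "Hr \<equiv> redH H V W"

lemma minv_K_carrier: "t \<in> {s, s + s, s + s + s} \<Longrightarrow> minv (K t) \<in> carrier_mat n n"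
  using invertible_mat_minv(3)[OF K_carrier K_invertible] .

lemma minv_Kr_carrier: "t \<in> {s, s + s, s + s + s} \<Longrightarrow> minv (Kr t) \<in> carrier_mat r r"
  using invertible_mat_minv(3)[OF _ reduced_K_invertible] adjoint_carrier_mat[OF W_carrier]
    K_carrier V_carrier
  unfolding redK_def by (metis mult_carrier_mat)

lemma Hr_carrier: "(t1, t2) \<in> {(s, s), (s + s, s), (s, s + s)} \<Longrightarrow> Hr t1 t2 \<in> carrier_mat r (r * r)"
  using adjoint_carrier_mat[OF W_carrier] H_carrier kron_carrier_mat[OF V_carrier V_carrier]
  unfolding redH_def by (metis mult_carrier_mat)

lemma Nr_carrier: "t \<in> {s, s + s, s + s + s} \<Longrightarrow> Nr t \<in> carrier_mat r (r * m)"
  using adjoint_carrier_mat[OF W_carrier] N_carrier[unfolded mult.commute[of n]]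
    kron_carrier_mat[OF one_carrier_mat V_carrier, of m]
  unfolding redN_def by (metis mult_carrier_mat mult.commute)

lemma sg1_carrier: "sg1 K B s \<in> carrier_mat n m"
  unfolding sg1_def using minv_K_carrier[of s] B_carrier[of s] by simp

lemma reduced_sg1_carrier: "sg1 Kr Br s \<in> carrier_mat r m"
  unfolding sg1_def redB_def using minv_Kr_carrier adjoint_carrier_mat[OF W_carrier] B_carrier
  by (metis insertI1 mult_carrier_mat)

lemma sg2_eq: "sg2 K B N H m s s = minv (K (s + s)) * diag_rhs2 N H m s (sg1 K B s)"
  by (rule sg2_diag) (auto intro: sg1_carrier minv_K_carrier H_carrier N_carrier)

lemma sg2_carrier: "sg2 K B N H m s s \<in> carrier_mat n (m * m)"
  unfolding sg2_eq using minv_K_carrier diag_rhs2_carrier_mat[OF sg1_carrier] H_carrier N_carrier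
  by (metis insertCI mult_carrier_mat)

lemma sg3_eq:
  "sg3 K B N H m s s s
     = (1/2 :: complex) \<cdot>\<^sub>m (minv (K (s + s + s)) * diag_rhs3 N H m s (sg1 K B s) (sg2 K B N H m s s))"
  by (rule sg3_diag) (auto intro: sg1_carrier sg2_carrier minv_K_carrier H_carrier N_carrier)


lemma reduced_sg1_lift:
  assumes "colspan n (sg1 K B s) \<subseteq> colspan n V"
  shows "V * sg1 Kr Br s = sg1 K B s"
proof -
  obtain Y where Y: "Y \<in> carrier_mat r m" "sg1 K B s = V * Y"
    using col_space_subset_factor[OF sg1_carrier V_carrier assms] .
  have "sg1 Kr Br s = Y"
    unfolding sg1_def redK_def redB_def
    by (rule projected_solve_state_in_span) (use Y K_carrier[of s] K_invertible[of s] V_carrier W_carrier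
        reduced_K_invertible[of s] B_carrier[of s] in \<open>simp_all add: sg1_def\<close>)
  with Y show ?thesis by simp
qed

lemma reduced_sg2_eq:
  assumes "colspan n (sg1 K B s) \<subseteq> colspan n V"
  shows "sg2 Kr Br Nr Hr m s s = minv (Kr (s + s)) * (ctr W * diag_rhs2 N H m s (sg1 K B s))"
proof -
  have "sg2 Kr Br Nr Hr m s s = minv (Kr (s + s)) * diag_rhs2 Nr Hr m s (sg1 Kr Br s)"
    by (rule sg2_diag) (auto intro: reduced_sg1_carrier minv_Kr_carrier Hr_carrier Nr_carrier)
  also have "diag_rhs2 Nr Hr m s (sg1 Kr Br s) = ctr W * diag_rhs2 N H m s (sg1 K B s)"
    using diag_rhs2_reduced[OF W_carrier V_carrier reduced_sg1_carrier, of H s N]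
      reduced_sg1_lift[OF assms] H_carrier N_carrier by simp
  finally show ?thesis .
qed

lemma reduced_sg2_lift:
  assumes "colspan n (sg1 K B s) \<subseteq> colspan n V" "colspan n (sg2 K B N H m s s) \<subseteq> colspan n V"
  shows "V * sg2 Kr Br Nr Hr m s s = sg2 K B N H m s s"
proof -
  obtain Y where Y: "Y \<in> carrier_mat r (m * m)" "sg2 K B N H m s s = V * Y"
    using col_space_subset_factor[OF sg2_carrier V_carrier assms(2)] .
  have "sg2 Kr Br Nr Hr m s s = Y"
    unfolding reduced_sg2_eq[OF assms(1)] redK_def
    by (rule projected_solve_state_in_span) (use Y K_carrier[of "s + s"] K_invertible[of "s + s"] V_carrier
        W_carrier reduced_K_invertible[of "s + s"] diag_rhs2_carrier_mat[OF sg1_carrier]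
        H_carrier[of s s] N_carrier[of s] in \<open>simp_all add: sg2_eq\<close>)
  with Y show ?thesis by simp
qed

lemma reduced_sg3_eq:
  assumes "colspan n (sg1 K B s) \<subseteq> colspan n V" "colspan n (sg2 K B N H m s s) \<subseteq> colspan n V"
  shows "sg3 Kr Br Nr Hr m s s s = (1/2 :: complex) \<cdot>\<^sub>m
    (minv (Kr (s + s + s)) * (ctr W * diag_rhs3 N H m s (sg1 K B s) (sg2 K B N H m s s)))"
proof -
  have "sg2 Kr Br Nr Hr m s s \<in> carrier_mat r (m * m)"
    using reduced_sg2_eq[OF assms(1)] minv_Kr_carrier adjoint_carrier_mat[OF W_carrier]
      diag_rhs2_carrier_mat[OF sg1_carrier] H_carrier N_carrier
    by (metis insertCI mult_carrier_mat)
  then have "sg3 Kr Br Nr Hr m s s s = (1/2 :: complex) \<cdot>\<^sub>m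
      (minv (Kr (s + s + s)) * diag_rhs3 Nr Hr m s (sg1 Kr Br s) (sg2 Kr Br Nr Hr m s s))"
    by (intro sg3_diag) (auto intro: reduced_sg1_carrier minv_Kr_carrier Hr_carrier Nr_carrier)
  also have "diag_rhs3 Nr Hr m s (sg1 Kr Br s) (sg2 Kr Br Nr Hr m s s)
      = ctr W * diag_rhs3 N H m s (sg1 K B s) (sg2 K B N H m s s)"
    using diag_rhs3_reduced[OF W_carrier V_carrier reduced_sg1_carrier \<open>sg2 Kr Br Nr Hr m s s \<in> _\<close>]
      reduced_sg1_lift[OF assms(1)] reduced_sg2_lift[OF assms] H_carrier N_carrier by simp
  finally show ?thesis .
qed

lemma TF1_eq_reduced:
  assumes t: "t \<in> {s, s + s, s + s + s}"
    and span: "colspan n (sg1 K B t) \<subseteq> colspan n V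
               \<or> colspan n (ctr (minv (K t)) * ctr (C t)) \<subseteq> colspan n W"
  shows "TF1 C K B t = TF1 Cr Kr Br t"
  unfolding TF1_def redC_def redK_def redB_def sg1_def
  by (rule projected_response_eq[symmetric])
    (use span[unfolded sg1_def] C_carrier[OF t] K_carrier[OF t] K_invertible[OF t] V_carrier W_carrier
      reduced_K_invertible[OF t] B_carrier[OF t] in auto)

lemma TF2_eq_reduced:
  assumes g1: "colspan n (sg1 K B s) \<subseteq> colspan n V"
    and span: "colspan n (sg2 K B N H m s s) \<subseteq> colspan n V
               \<or> colspan n (ctr (minv (K (s + s))) * ctr (C (s + s))) \<subseteq> colspan n W"
  shows "TF2 C K B N H m s s = TF2 Cr Kr Br Nr Hr m s s"
  unfolding TF2_def redC_def reduced_sg2_eq[OF g1] redK_def sg2_eq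
  by (rule projected_response_eq[symmetric])
    (use span[unfolded sg2_eq] C_carrier[of "s + s"] K_carrier[of "s + s"] K_invertible[of "s + s"]
      V_carrier W_carrier reduced_K_invertible[of "s + s"] diag_rhs2_carrier_mat[OF sg1_carrier]
      H_carrier[of s s] N_carrier[of s] in auto)

lemma TF3_eq_reduced:
  assumes g1: "colspan n (sg1 K B s) \<subseteq> colspan n V"
    and g2: "colspan n (sg2 K B N H m s s) \<subseteq> colspan n V"
    and span: "colspan n (minv (K (s + s + s)) * diag_rhs3 N H m s (sg1 K B s) (sg2 K B N H m s s))
                 \<subseteq> colspan n V
               \<or> colspan n (ctr (minv (K (s + s + s))) * ctr (C (s + s + s))) \<subseteq> colspan n W"
  shows "TF3 C K B N H m s s s = TF3 Cr Kr Br Nr Hr m s s s"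
proof -
  define t where "t = s + s + s"
  define R where "R = diag_rhs3 N H m s (sg1 K B s) (sg2 K B N H m s s)"
  have t: "t \<in> {s, s + s, s + s + s}" by (simp add: t_def)
  have R: "R \<in> carrier_mat n (m * m * m)"
    unfolding R_def using diag_rhs3_carrier_mat[OF sg1_carrier sg2_carrier] H_carrier N_carrier by simp
  have Kr: "ctr W * K t * V \<in> carrier_mat r r"
    using adjoint_carrier_mat[OF W_carrier] K_carrier[OF t] V_carrier by simp
  have "C t * V * (minv (ctr W * K t * V) * (ctr W * R)) = C t * (minv (K t) * R)"
    by (rule projected_response_eq) (use span[folded t_def R_def] C_carrier[OF t] K_carrier[OF t]
        K_invertible[OF t] V_carrier W_carrier reduced_K_invertible[OF t] R in auto)
  then show ?thesis
    unfolding TF3_def redC_def redK_def sg3_eq reduced_sg3_eq[OF g1 g2]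
      t_def[symmetric] R_def[symmetric]
    using mult_smult_distrib[OF C_carrier[OF t] mult_carrier_mat[OF minv_K_carrier[OF t] R]]
      mult_smult_distrib[OF mult_carrier_mat[OF C_carrier[OF t] V_carrier] mult_carrier_mat[OF
        invertible_mat_minv(3)[OF Kr reduced_K_invertible[OF t]]
        mult_carrier_mat[OF adjoint_carrier_mat[OF W_carrier] R]]]
    by simp
qed

end

theorem theorem4p3:
  fixes n m p r :: nat
    and C K B N :: "complex \<Rightarrow> complex mat"
    and H :: "complex \<Rightarrow> complex \<Rightarrow> complex mat"
    and V W V1 V2 V3 W1 W2 :: "complex mat"
    and \<sigma> :: complex
  assumes C_dim: "\<And>s. s \<in> {\<sigma>, 2*\<sigma>, 3*\<sigma>} \<Longrightarrow> C s \<in> carrier_mat p n"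
    and K_dim: "\<And>s. s \<in> {\<sigma>, 2*\<sigma>, 3*\<sigma>} \<Longrightarrow> K s \<in> carrier_mat n n"
    and B_dim: "\<And>s. s \<in> {\<sigma>, 2*\<sigma>, 3*\<sigma>} \<Longrightarrow> B s \<in> carrier_mat n m"
    and N_dim: "\<And>s. s \<in> {\<sigma>, 2*\<sigma>, 3*\<sigma>} \<Longrightarrow> N s \<in> carrier_mat n (n * m)"
    and H_dim: "\<And>s1 s2. (s1, s2) \<in> {(\<sigma>, \<sigma>), (2*\<sigma>, \<sigma>), (\<sigma>, 2*\<sigma>)} \<Longrightarrow> H s1 s2 \<in> carrier_mat n (n * n)"
    and K_inv: "\<And>s. s \<in> {\<sigma>, 2*\<sigma>, 3*\<sigma>} \<Longrightarrow> invertible_mat (K s)"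
    and V_dim: "V \<in> carrier_mat n r" and W_dim: "W \<in> carrier_mat n r"
    and V_rank: "vec_space.rank n V = r"
    and W_rank: "vec_space.rank n W = r"
    and Kr_inv: "\<And>s. s \<in> {\<sigma>, 2*\<sigma>, 3*\<sigma>} \<Longrightarrow> invertible_mat (ctr W * K s * V)"
    and V1_def: "V1 = minv (K \<sigma>) * B \<sigma>"
    and V2_def: "V2 = minv (K (2*\<sigma>)) * (H \<sigma> \<sigma> * kron V1 V1 + N \<sigma> * kron (1\<^sub>m m) V1)"
    and V3_def: "V3 = minv (K (3*\<sigma>)) * (H (2*\<sigma>) \<sigma> * kron V2 V1 + H \<sigma> (2*\<sigma>) * kron V1 V2
                      + N (2*\<sigma>) * kron (1\<^sub>m m) V2)"
    and W1_def: "W1 = ctr (minv (K (2*\<sigma>))) * ctr (C (2*\<sigma>))"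
    and W2_def: "W2 = ctr (minv (K (3*\<sigma>))) * ctr (C (3*\<sigma>))"
  shows
   "(colspan n (hcat n [V1, V2, V3]) \<subseteq> colspan n V \<longrightarrow>
      TF1 C K B \<sigma> = TF1 (redC C V) (redK K V W) (redB B W) \<sigma>
    \<and> TF2 C K B N H m \<sigma> \<sigma> = TF2 (redC C V) (redK K V W) (redB B W) (redN N m V W) (redH H V W) m \<sigma> \<sigma>
    \<and> TF3 C K B N H m \<sigma> \<sigma> \<sigma> = TF3 (redC C V) (redK K V W) (redB B W) (redN N m V W) (redH H V W) m \<sigma> \<sigma> \<sigma>)
  \<and> (colspan n V1 \<subseteq> colspan n V \<and> colspan n W1 \<subseteq> colspan n W \<longrightarrow>
      TF1 C K B \<sigma> = TF1 (redC C V) (redK K V W) (redB B W) \<sigma>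
    \<and> TF1 C K B (2*\<sigma>) = TF1 (redC C V) (redK K V W) (redB B W) (2*\<sigma>)
    \<and> TF2 C K B N H m \<sigma> \<sigma> = TF2 (redC C V) (redK K V W) (redB B W) (redN N m V W) (redH H V W) m \<sigma> \<sigma>)
  \<and> (colspan n (hcat n [V1, V2]) \<subseteq> colspan n V \<and> colspan n W2 \<subseteq> colspan n W \<longrightarrow>
      TF1 C K B \<sigma> = TF1 (redC C V) (redK K V W) (redB B W) \<sigma>
    \<and> TF1 C K B (3*\<sigma>) = TF1 (redC C V) (redK K V W) (redB B W) (3*\<sigma>)
    \<and> TF2 C K B N H m \<sigma> \<sigma> = TF2 (redC C V) (redK K V W) (redB B W) (redN N m V W) (redH H V W) m \<sigma> \<sigma>
    \<and> TF3 C K B N H m \<sigma> \<sigma> \<sigma> = TF3 (redC C V) (redK K V W) (redB B W) (redN N m V W) (redH H V W) m \<sigma> \<sigma> \<sigma>)"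
proof -
  have sums: "\<sigma> + \<sigma> = 2 * \<sigma>" "2 * \<sigma> + \<sigma> = 3 * \<sigma>" by simp_all
  interpret projected_qb_system n m p r C K B N H V W \<sigma>
    by unfold_locales (simp_all only: sums assms)
  have V1: "sg1 K B \<sigma> = V1" by (simp add: V1_def sg1_def)
  have V2: "sg2 K B N H m \<sigma> \<sigma> = V2" unfolding sg2_eq V2_def diag_rhs2_def V1 sums ..
  have V3: "minv (K (3 * \<sigma>)) * diag_rhs3 N H m \<sigma> V1 V2 = V3" unfolding V3_def diag_rhs3_def sums ..
  have dims: "\<And>A. A \<in> set [V1, V2, V3] \<Longrightarrow> dim_row A = n"
    using sg1_carrier sg2_carrier minv_K_carrier[of "3 * \<sigma>"] unfolding V1 V2 V3[symmetric] by auto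
  have hcat3: "colspan n V1 \<subseteq> colspan n V \<and> colspan n V2 \<subseteq> colspan n V \<and> colspan n V3 \<subseteq> colspan n V"
    if "colspan n (hcat n [V1, V2, V3]) \<subseteq> colspan n V"
    using col_space_hcat_subset[OF dims _ that] by simp
  have hcat2: "colspan n V1 \<subseteq> colspan n V \<and> colspan n V2 \<subseteq> colspan n V"
    if "colspan n (hcat n [V1, V2]) \<subseteq> colspan n V"
    using col_space_hcat_subset[OF _ _ that] dims by auto
  note T1 = TF1_eq_reduced[unfolded sums]
  note T2 = TF2_eq_reduced[unfolded sums V1 V2, folded W1_def]
  note T3 = TF3_eq_reduced[unfolded sums V1 V2 V3, folded W2_def]
  show ?thesis
    using T1[of \<sigma>, unfolded V1] T1[of "2 * \<sigma>", folded W1_def] T1[of "3 * \<sigma>", folded W2_def]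
      T2 T3 hcat3 hcat2 by auto
qed

end
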